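(* Let $\varepsilon\ge 0$ be real and $p,q$ positive integers with $p/q\ge 2$. For every fractional $(p/q+\varepsilon)$-coloring $c$ of the Kneser graph $K_{p/q}$ there exists a vertex $v$ of $K_{p/q}$ such that the Lebesgue measure of $\bigcup_{u\in N(v)}c(u)$ is at least $p/q-1$, where $N(v)$ is the set of neighbors of $v$.
   Context: For integers $1\le q\le p$, the Kneser graph $K_{p/q}$ has as vertices all $q$-element subsets of $[p]$, two being adjacent iff they are disjoint. A fractional $m$-coloring of a graph (real $m>0$) assigns to each vertex a measurable subset of $[0,m)$ of Lebesgue measure one so that adjacent vertices receive disjoint sets. *)

theory Defs
  imports "HOL-Analysis.Analysis"
begin

definition kneser_vertices :: "nat \<Rightarrow> nat \<Rightarrow> nat set set" where
  "kneser_vertices p q = {A. A \<subseteq> {1..p} \<and> card A = q}"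

definition kneser_adj :: "nat \<Rightarrow> nat \<Rightarrow> nat set \<Rightarrow> nat set \<Rightarrow> bool" where
  "kneser_adj p q A B \<longleftrightarrow> A \<in> kneser_vertices p q \<and> B \<in> kneser_vertices p q \<and> A \<inter> B = {}"

definition kneser_nbhd :: "nat \<Rightarrow> nat \<Rightarrow> nat set \<Rightarrow> nat set set" where
  "kneser_nbhd p q v = {u. kneser_adj p q v u}"

definition fractional_coloring_kneser :: "nat \<Rightarrow> nat \<Rightarrow> real \<Rightarrow> (nat set \<Rightarrow> real set) \<Rightarrow> bool" where
  "fractional_coloring_kneser p q m c \<longleftrightarrow>
     (\<forall>v \<in> kneser_vertices p q.
        c v \<in> sets lebesgue \<and> c v \<subseteq> {0..<m} \<and> emeasure lebesgue (c v) = 1) \<and>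
     (\<forall>u v. kneser_adj p q u v \<longrightarrow> c u \<inter> c v = {})"

end

theory Submission
  imports Defs "HOL-Number_Theory.Cong"
begin

(* Consider the p cyclic arcs A_i = {i+1, ..., i+q} (read modulo p) of [p];
   they are vertices of K_{p/q}, and A_i, A_j are disjoint whenever i = j + q + l
   (mod p) with 0 <= l <= p - 2q.  Fix a point t and let S be the set of indices j
   with t in c(A_j).  Disjointness of colours forces S to be disjoint from the cyclic
   sumset T = S + q + {0, ..., p-2q}, and every i in T has t in the colour of some
   neighbour of A_i.  A Cauchy-Davenport type estimate |T| >= |S| + (p-2q) together with
   |S| + |T| <= p gives (p-q)|S| <= q|T|.  Integrating this pointwise inequality over t
   yields (p-q) p <= q * sum_i measure(U_i), where U_i is the union of the colours of
   the neighbours of A_i; hence some U_i has measure at least p/q - 1. *)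


section \<open>Cyclic sumsets of an interval\<close>

definition cyclic_sumset :: "nat \<Rightarrow> nat set \<Rightarrow> nat \<Rightarrow> nat \<Rightarrow> nat set" where
  "cyclic_sumset p S r L = (\<lambda>(j, l). (j + r + l) mod p) ` (S \<times> {..<L})"

lemma cyclic_sumset_subset: "0 < p \<Longrightarrow> cyclic_sumset p S r L \<subseteq> {..<p}"
  unfolding cyclic_sumset_def by auto

lemma successor_closed_covers:
  fixes T :: "nat set"
  assumes "x0 \<in> T" "x0 < p" and closed: "\<forall>x\<in>T. (x + 1) mod p \<in> T"
  shows "{..<p} \<subseteq> T"
proof -
  have orbit: "(x0 + n) mod p \<in> T" for n
  proof (induction n)
    case 0
    then show ?case using assms by simp
  next
    case (Suc n)
    have "(x0 + Suc n) mod p = ((x0 + n) mod p + 1) mod p" by (simp add: mod_simps)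
    then show ?case using Suc closed by metis
  qed
  show ?thesis
  proof
    fix y assume "y \<in> {..<p}"
    then have "y = (x0 + (p - x0 + y)) mod p" using \<open>x0 < p\<close> by simp
    then show "y \<in> T" using orbit by metis
  qed
qed

lemma inj_on_cyclic_shift:
  fixes p r :: nat
  assumes "S \<subseteq> {..<p}"
  shows "inj_on (\<lambda>j. (j + r) mod p) S"
proof
  fix x y assume "x \<in> S" "y \<in> S" "(x + r) mod p = (y + r) mod p"
  then have "[x + r = y + r] (mod p)" by (simp add: cong_def)
  then have "[x = y] (mod p)" by (simp only: cong_add_rcancel_nat)
  then show "x = y"
    using \<open>x \<in> S\<close> \<open>y \<in> S\<close> assms by (auto intro: cong_less_modulus_unique_nat)
qed

text \<open>Each additional summand enlarges the sumset by at least one element, until it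
  covers Z/pZ: a Cauchy-Davenport estimate for sums with an interval.\<close>
lemma card_cyclic_sumset:
  assumes S: "S \<subseteq> {..<p}" "S \<noteq> {}" and "L \<ge> 1"
  shows "cyclic_sumset p S r L = {..<p} \<or> card S + L - 1 \<le> card (cyclic_sumset p S r L)"
  using \<open>L \<ge> 1\<close>
proof (induction L rule: nat_induct_at_least)
  case base
  have "S \<times> {..<1} = (\<lambda>j. (j, 0::nat)) ` S" by auto
  then have "cyclic_sumset p S r 1 = (\<lambda>j. (j + r) mod p) ` S"
    unfolding cyclic_sumset_def by (simp add: image_image)
  then show ?case using card_image[OF inj_on_cyclic_shift[OF S(1)]] by simp
next
  case (Suc L)
  have p0: "0 < p" using S by auto
  define T where "T = cyclic_sumset p S r L"
  define T' where "T' = cyclic_sumset p S r (Suc L)"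
  have "T \<subseteq> T'" "T' \<subseteq> {..<p}"
    unfolding T_def T'_def cyclic_sumset_def using p0 by auto
  then have fin: "finite T'" "finite T" by (auto intro: finite_subset)
  show ?case
  proof (cases "T = {..<p}")
    case True
    then show ?thesis using \<open>T \<subseteq> T'\<close> \<open>T' \<subseteq> {..<p}\<close> unfolding T'_def by blast
  next
    case False
    then have card_T: "card S + L - 1 \<le> card T" using Suc.IH unfolding T_def by simp
    obtain j0 where "j0 \<in> S" using S by auto
    then have start: "(j0 + r + 0) mod p \<in> T"
      unfolding T_def cyclic_sumset_def using Suc.hyps by (intro image_eqI[of _ _ "(j0, 0)"]) auto
    have "\<exists>x\<in>T. (x + 1) mod p \<notin> T"
    proof (rule ccontr)
      assume "\<not> ?thesis"
      then have "{..<p} \<subseteq> T" using successor_closed_covers[OF start] p0 by auto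
      then show False using False \<open>T \<subseteq> T'\<close> \<open>T' \<subseteq> {..<p}\<close> by blast
    qed
    then obtain x where x: "x \<in> T" "(x + 1) mod p \<notin> T" by blast
    from x(1) obtain j l where jl: "j \<in> S" "l < L" "x = (j + r + l) mod p"
      unfolding T_def cyclic_sumset_def by auto
    have "(x + 1) mod p = (j + r + (l + 1)) mod p" using jl by (simp add: mod_simps)
    then have "(x + 1) mod p \<in> T'" unfolding T'_def cyclic_sumset_def using jl by force
    then have "card (insert ((x + 1) mod p) T) \<le> card T'"
      using \<open>T \<subseteq> T'\<close> fin by (intro card_mono) auto
    then have "card T + 1 \<le> card T'" using x(2) fin by simp
    moreover have "card S > 0" using S finite_subset by fastforce
    ultimately show ?thesis using card_T unfolding T'_def by linarith
  qed
qed

lemma card_sum_avoiding_set: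
  assumes "2 * q \<le> p" "S \<subseteq> {..<p}"
    and avoid: "S \<inter> cyclic_sumset p S q (p - 2 * q + 1) = {}"
  shows "(p - q) * card S \<le> q * card (cyclic_sumset p S q (p - 2 * q + 1))"
proof (cases "S = {}")
  case False
  define T where "T = cyclic_sumset p S q (p - 2 * q + 1)"
  have "0 < p" using False \<open>S \<subseteq> {..<p}\<close> by auto
  then have "T \<subseteq> {..<p}" unfolding T_def by (rule cyclic_sumset_subset)
  then have "T \<noteq> {..<p}" using avoid False \<open>S \<subseteq> {..<p}\<close> unfolding T_def by blast
  then have grow: "card S + (p - 2 * q) \<le> card T"
    using card_cyclic_sumset[OF \<open>S \<subseteq> {..<p}\<close> False, of "p - 2 * q + 1" q] unfolding T_def by simp
  have "card S + card T = card (S \<union> T)"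
    using avoid \<open>S \<subseteq> {..<p}\<close> \<open>T \<subseteq> {..<p}\<close> unfolding T_def
    by (intro card_Un_disjoint[symmetric]) (auto intro: finite_subset)
  also have "\<dots> \<le> p" using \<open>S \<subseteq> {..<p}\<close> \<open>T \<subseteq> {..<p}\<close> card_mono[of "{..<p}" "S \<union> T"] by simp
  finally have small: "card S \<le> q" using grow \<open>2 * q \<le> p\<close> by linarith
  have "p - q = q + (p - 2 * q)" using \<open>2 * q \<le> p\<close> by arith
  then have "(p - q) * card S = q * card S + (p - 2 * q) * card S" by (metis add_mult_distrib)
  also have "\<dots> \<le> q * card S + (p - 2 * q) * q" using small by simp
  also have "\<dots> = q * (card S + (p - 2 * q))" by (simp add: algebra_simps)
  also have "\<dots> \<le> q * card T" using grow by simp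
  finally show ?thesis unfolding T_def .
qed simp


section \<open>Cyclic arcs in the Kneser graph\<close>

definition cyclic_arc :: "nat \<Rightarrow> nat \<Rightarrow> nat \<Rightarrow> nat set" where
  "cyclic_arc p q i = (\<lambda>a. (i + a) mod p + 1) ` {..<q}"

lemma cyclic_arc_vertex:
  assumes "0 < p" "q \<le> p"
  shows "cyclic_arc p q i \<in> kneser_vertices p q"
proof -
  have "inj_on (\<lambda>a. (a + i) mod p) {..<q}"
    by (rule inj_on_cyclic_shift) (use \<open>q \<le> p\<close> in auto)
  then have "inj_on (\<lambda>a. (i + a) mod p + 1) {..<q}" by (simp add: inj_on_def add.commute)
  then have "card (cyclic_arc p q i) = q" unfolding cyclic_arc_def by (simp add: card_image)
  moreover have "cyclic_arc p q i \<subseteq> {1..p}"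
    unfolding cyclic_arc_def using \<open>0 < p\<close> by (auto simp: Suc_le_eq)
  ultimately show ?thesis unfolding kneser_vertices_def by simp
qed

lemma cyclic_arcs_disjoint:
  assumes "2 * q \<le> p" "l \<le> p - 2 * q"
  shows "cyclic_arc p q ((j + q + l) mod p) \<inter> cyclic_arc p q j = {}"
proof (rule ccontr)
  assume "\<not> ?thesis"
  then obtain a b where ab: "a < q" "b < q" "((j + q + l) mod p + a) mod p = (j + b) mod p"
    unfolding cyclic_arc_def by auto
  then have "[j + (q + l + a) = j + b] (mod p)" by (simp add: cong_def mod_simps add.assoc)
  then have "[q + l + a = b] (mod p)" by (simp only: cong_add_lcancel_nat)
  moreover have "q + l + a < p" "b < p" using assms ab by auto
  ultimately have "q + l + a = b" using cong_less_modulus_unique_nat by blast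
  then show False using ab by simp
qed

lemma cyclic_arcs_adjacent:
  assumes "0 < p" "2 * q \<le> p" "l \<le> p - 2 * q"
  shows "kneser_adj p q (cyclic_arc p q ((j + q + l) mod p)) (cyclic_arc p q j)"
  using cyclic_arcs_disjoint[OF assms(2,3)] cyclic_arc_vertex[OF assms(1)] assms(2)
  unfolding kneser_adj_def by simp


lemma pointwise_neighbourhood_count:
  assumes col: "fractional_coloring_kneser p q m c" and "0 < p" "2 * q \<le> p"
  shows "real (p - q) * card {j\<in>{..<p}. t \<in> c (cyclic_arc p q j)}
           \<le> real q * card {i\<in>{..<p}. t \<in> (\<Union>u \<in> kneser_nbhd p q (cyclic_arc p q i). c u)}"
proof -
  define S where "S = {j\<in>{..<p}. t \<in> c (cyclic_arc p q j)}"
  define N where "N = {i\<in>{..<p}. t \<in> (\<Union>u \<in> kneser_nbhd p q (cyclic_arc p q i). c u)}"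
  define T where "T = cyclic_sumset p S q (p - 2 * q + 1)"
  have window: "\<exists>j l. j \<in> S \<and> l \<le> p - 2 * q \<and> i = (j + q + l) mod p" if "i \<in> T" for i
    using that unfolding T_def cyclic_sumset_def by (force simp: less_Suc_eq_le)
  have adjacent_colours_disjoint: "c u \<inter> c v = {}" if "kneser_adj p q u v" for u v
    using col that unfolding fractional_coloring_kneser_def by blast
  have "S \<inter> T = {}"
  proof (rule ccontr)
    assume "S \<inter> T \<noteq> {}"
    then obtain i j l where "i \<in> S" "j \<in> S" "l \<le> p - 2 * q" "i = (j + q + l) mod p"
      using window by blast
    then show False
      using adjacent_colours_disjoint[OF cyclic_arcs_adjacent[OF \<open>0 < p\<close> \<open>2 * q \<le> p\<close>]]
      unfolding S_def by blast
  qed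
  moreover have "S \<subseteq> {..<p}" unfolding S_def by auto
  ultimately have "(p - q) * card S \<le> q * card T"
    using card_sum_avoiding_set[OF \<open>2 * q \<le> p\<close>] unfolding T_def by blast
  moreover have "T \<subseteq> N"
  proof
    fix i assume "i \<in> T"
    then obtain j l where jl: "j \<in> S" "l \<le> p - 2 * q" "i = (j + q + l) mod p"
      using window by blast
    then have "cyclic_arc p q j \<in> kneser_nbhd p q (cyclic_arc p q i)"
      using cyclic_arcs_adjacent[OF \<open>0 < p\<close> \<open>2 * q \<le> p\<close>] unfolding kneser_nbhd_def by blast
    then show "i \<in> N" using jl \<open>0 < p\<close> unfolding N_def S_def by auto
  qed
  then have "card T \<le> card N" unfolding N_def by (intro card_mono) auto
  ultimately have "(p - q) * card S \<le> q * card N"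
    using mult_le_mono2[of "card T" "card N" q] by linarith
  then show ?thesis unfolding S_def N_def by (simp only: of_nat_mult[symmetric] of_nat_le_iff)
qed


section \<open>Measure-theoretic tools\<close>

lemma coloring_union_lmeasurable:
  assumes col: "fractional_coloring_kneser p q m c" and "X \<subseteq> kneser_vertices p q"
  shows "(\<Union>u\<in>X. c u) \<in> lmeasurable"
proof (rule fmeasurable_UN[where A = "{0..m}"])
  have "kneser_vertices p q \<subseteq> Pow {1..p}" unfolding kneser_vertices_def by auto
  then show "countable X"
    using \<open>X \<subseteq> kneser_vertices p q\<close> by (meson countable_finite finite_Pow_iff finite_atLeastAtMost finite_subset)
  show "{0..m} \<in> lmeasurable" using lmeasurable_cbox[of 0 m] by simp
  fix u assume "u \<in> X"
  then have "c u \<in> sets lebesgue \<and> c u \<subseteq> {0..<m}"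
    using col \<open>X \<subseteq> kneser_vertices p q\<close> unfolding fractional_coloring_kneser_def by blast
  then show "c u \<subseteq> {0..m}" "c u \<in> sets lebesgue" by auto
qed

lemma coloring_vertex_measure:
  assumes "fractional_coloring_kneser p q m c" and "v \<in> kneser_vertices p q"
  shows "measure lebesgue (c v) = 1"
proof -
  have "emeasure lebesgue (c v) = 1"
    using assms unfolding fractional_coloring_kneser_def by blast
  then show ?thesis by (simp only: measure_def enn2real_1)
qed

lemma sum_indicator_eq_multiplicity:
  fixes F :: "'k \<Rightarrow> 'a set"
  assumes "finite K"
  shows "(\<Sum>k\<in>K. indicator (F k) t :: real) = card {k\<in>K. t \<in> F k}"
  using sum_indicator_mult[OF assms, of F "\<lambda>_. t" "\<lambda>_. 1::real"] by simp

lemma measure_sum_le_of_pointwise_count: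
  fixes B :: "'j \<Rightarrow> 'a set" and U :: "'i \<Rightarrow> 'a set" and a b :: real
  assumes "finite J" "finite I"
    and B: "\<And>j. j \<in> J \<Longrightarrow> B j \<in> fmeasurable M" and U: "\<And>i. i \<in> I \<Longrightarrow> U i \<in> fmeasurable M"
    and count: "\<And>t. a * card {j\<in>J. t \<in> B j} \<le> b * card {i\<in>I. t \<in> U i}"
  shows "a * (\<Sum>j\<in>J. measure M (B j)) \<le> b * (\<Sum>i\<in>I. measure M (U i))"
proof -
  have int_B: "integrable M (\<lambda>t. \<Sum>j\<in>J. indicator (B j) t :: real)"
    and integral_B: "integral\<^sup>L M (\<lambda>t. \<Sum>j\<in>J. indicator (B j) t :: real) = (\<Sum>j\<in>J. measure M (B j))"
    using B by (auto simp: fmeasurable_def)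
  have int_U: "integrable M (\<lambda>t. \<Sum>i\<in>I. indicator (U i) t :: real)"
    and integral_U: "integral\<^sup>L M (\<lambda>t. \<Sum>i\<in>I. indicator (U i) t :: real) = (\<Sum>i\<in>I. measure M (U i))"
    using U by (auto simp: fmeasurable_def)
  have "a * (\<Sum>j\<in>J. measure M (B j)) = integral\<^sup>L M (\<lambda>t. a * (\<Sum>j\<in>J. indicator (B j) t))"
    by (simp add: integral_B)
  also have "\<dots> \<le> integral\<^sup>L M (\<lambda>t. b * (\<Sum>i\<in>I. indicator (U i) t))"
    using int_B int_U count \<open>finite J\<close> \<open>finite I\<close>
    by (intro integral_mono) (auto simp: sum_indicator_eq_multiplicity)
  also have "\<dots> = b * (\<Sum>i\<in>I. measure M (U i))"
    by (simp add: integral_U)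
  finally show ?thesis .
qed

lemma exists_ge_average:
  fixes f :: "'i \<Rightarrow> real" and a :: real
  assumes "finite I" "I \<noteq> {}" "card I * a \<le> (\<Sum>i\<in>I. f i)"
  shows "\<exists>i\<in>I. a \<le> f i"
proof (rule ccontr)
  assume "\<not> ?thesis"
  then have "(\<Sum>i\<in>I. f i) < (\<Sum>i\<in>I. a)" using assms(1,2) by (intro sum_strict_mono) auto
  then show False using assms(3) by simp
qed


theorem mainTheorem8:
  fixes \<epsilon> :: real and p q :: nat and c :: "nat set \<Rightarrow> real set"
  assumes "\<epsilon> \<ge> 0" and "p > 0" and "q > 0" and "real p / real q \<ge> 2"
    and "fractional_coloring_kneser p q (real p / real q + \<epsilon>) c"
  shows "\<exists>v \<in> kneser_vertices p q.
           measure lebesgue (\<Union>u \<in> kneser_nbhd p q v. c u) \<ge> real p / real q - 1"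
proof -
  note col = assms(5)
  have "2 * q \<le> p" using assms(3,4) by (simp add: field_simps)
  have arc: "cyclic_arc p q j \<in> kneser_vertices p q" for j
    using cyclic_arc_vertex \<open>p > 0\<close> \<open>2 * q \<le> p\<close> by simp
  define U where "U i = (\<Union>u \<in> kneser_nbhd p q (cyclic_arc p q i). c u)" for i
  have "real (p - q) * (\<Sum>j<p. measure lebesgue (c (cyclic_arc p q j)))
          \<le> real q * (\<Sum>i<p. measure lebesgue (U i))"
  proof (rule measure_sum_le_of_pointwise_count)
    show "real (p - q) * card {j\<in>{..<p}. t \<in> c (cyclic_arc p q j)} \<le> real q * card {i\<in>{..<p}. t \<in> U i}"
      for t using pointwise_neighbourhood_count[OF col \<open>p > 0\<close> \<open>2 * q \<le> p\<close>] unfolding U_def .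
    show "c (cyclic_arc p q j) \<in> lmeasurable" for j
      using coloring_union_lmeasurable[OF col, of "{cyclic_arc p q j}"] arc by simp
    show "U i \<in> lmeasurable" for i
      unfolding U_def by (rule coloring_union_lmeasurable[OF col]) (auto simp: kneser_nbhd_def kneser_adj_def)
  qed auto
  then have "real (p - q) * p \<le> real q * (\<Sum>i<p. measure lebesgue (U i))"
    using coloring_vertex_measure[OF col arc] by simp
  then have "card {..<p} * (real (p - q) / real q) \<le> (\<Sum>i<p. measure lebesgue (U i))"
    using \<open>q > 0\<close> by (simp add: pos_divide_le_eq mult.commute)
  moreover have "real (p - q) / real q = real p / real q - 1"
    using \<open>q > 0\<close> \<open>2 * q \<le> p\<close> by (simp add: diff_divide_distrib)
  ultimately obtain i where "measure lebesgue (U i) \<ge> real p / real q - 1"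
    using exists_ge_average[of "{..<p}"] \<open>p > 0\<close> by auto
  then show ?thesis using arc unfolding U_def by blast
qed

end
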